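(* Let $n$ be even and $S\ge2$. Any randomized AMPC algorithm with I/O capacity $S$ that computes $\mathrm{1v2Cycle}$ on $n$ vertices with error at most $1/6$ requires at least $\frac16\log_S n-\frac12\log_S 2=\Omega(\log_S n)$ rounds. In particular, if $S=n^\epsilon$ for $\epsilon\in(0,1)$, any such algorithm requires $\Omega(1/\epsilon)$ rounds.
   Context: Graphs on vertex set $\{1,\dots,n\}$ are encoded as $x\in\{0,1\}^N$, $N=\binom n2$, one bit per unordered pair (adjacency matrix). $\mathrm{1v2Cycle}:\Delta\to\{0,1\}$ is defined on the set $\Delta$ of graphs that are either a single $n$-cycle (value $1$) or a disjoint union of two cycles of length $n/2$ (value $0$). AMPC model with I/O capacity $S$: computation proceeds in rounds communicating through distributed data stores (DDS) $\mathcal{D}_0,\dots,\mathcal{D}_R$, each storing under each key a multiset of values (possibly empty; duplicates allowed, each value written by a unique machine). On input $x$, $\mathcal{D}_0$ consists of the pairs $(i,x_i)$, $i=1,\dots,N$. In round $r\ge1$ each machine (arbitrarily many, computationally unbounded, deterministic) adaptively queries keys of $\mathcal{D}_{r-1}$, receiving the whole multiset under the key, with later queries depending arbitrarily on earlier ones and their responses; the total number of values in responses plus the number of empty-response queries is at most $S$; it then writes at most $S$ key-value pairs to $\mathcal{D}_r$ as a function of its queries and responses. Algorithms are also run on invalid inputs $x\in\{0,1\}^N\setminus\Delta$ (a machine exceeding its budget stops and writes nothing), and in every round, on every input in $\{0,1\}^N$, at most $S$ values are written under any single key. A deterministic algorithm outputs $b$ on $x$ if $\mathcal{D}_R$ contains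 exactly the single pair $(\textsc{answer},b)$. A randomized AMPC algorithm is a probability distribution over deterministic AMPC algorithms; its number of rounds is the maximum over its support; it computes $g$ with error at most $\delta$ if for each $x\in\Delta$ it outputs $g(x)$ with probability at least $1-\delta$. *)

theory Defs
  imports "HOL-Probability.Probability"
begin

text \<open>Input bits are indexed by 1..N, N = n choose 2; the bit with index i is the
  adjacency bit of the unordered pair pair_of i (an encoding bijection, which the
  theorem quantifies over).  Inputs are functions nat => bool; only indices 1..N matter.\<close>

definition edges_of :: "nat \<Rightarrow> (nat \<Rightarrow> nat set) \<Rightarrow> (nat \<Rightarrow> bool) \<Rightarrow> nat set set" where
  "edges_of n pair_of x = {pair_of i | i. i \<in> {1..n choose 2} \<and> x i}"

definition cycle_edges :: "nat list \<Rightarrow> nat set set" where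
  "cycle_edges vs = {{vs ! i, vs ! ((i + 1) mod length vs)} | i. i < length vs}"

definition single_cycle :: "nat \<Rightarrow> nat set set \<Rightarrow> bool" where
  "single_cycle n E \<longleftrightarrow> (\<exists>vs. distinct vs \<and> set vs = {1..n} \<and> length vs \<ge> 3
      \<and> E = cycle_edges vs)"

definition two_cycles :: "nat \<Rightarrow> nat set set \<Rightarrow> bool" where
  "two_cycles n E \<longleftrightarrow> (\<exists>vs ws. distinct (vs @ ws) \<and> set (vs @ ws) = {1..n}
      \<and> length vs = n div 2 \<and> length ws = n div 2 \<and> n div 2 \<ge> 3
      \<and> E = cycle_edges vs \<union> cycle_edges ws)"

definition in_Delta :: "nat \<Rightarrow> (nat \<Rightarrow> nat set) \<Rightarrow> (nat \<Rightarrow> bool) \<Rightarrow> bool" where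
  "in_Delta n pair_of x \<longleftrightarrow>
     single_cycle n (edges_of n pair_of x) \<or> two_cycles n (edges_of n pair_of x)"

definition one_vs_two_cycle :: "nat \<Rightarrow> (nat \<Rightarrow> nat set) \<Rightarrow> (nat \<Rightarrow> bool) \<Rightarrow> nat" where
  "one_vs_two_cycle n pair_of x = (if single_cycle n (edges_of n pair_of x) then 1 else 0)"

text \<open>Keys and values are natural numbers (any finite data can be encoded).  Keys 1..N
  carry the input in the initial DDS; key 0 is the special key ANSWER.\<close>

type_synonym dds = "nat \<Rightarrow> nat multiset"
type_synonym hist = "(nat \<times> nat multiset) list"

datatype action = Query nat | Write "(nat \<times> nat) list"

text \<open>A deterministic, computationally unbounded, adaptive machine: given the history of
  its queries and the responses, it either issues the next query or writes its output.\<close>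
type_synonym machine = "hist \<Rightarrow> action"
type_synonym round = "nat \<Rightarrow> machine"
type_synonym alg = "round list"

definition answer_key :: nat where "answer_key = 0"

definition query_cost :: "hist \<Rightarrow> nat" where
  "query_cost h = sum_list (map (\<lambda>(k, r). max 1 (size r)) h)"

text \<open>Running a machine with fuel; exceeding the I/O budget S (in queries or in writes)
  makes it stop and write nothing.  Fuel S+1 always suffices since each query costs >= 1.\<close>
fun run_machine :: "nat \<Rightarrow> dds \<Rightarrow> machine \<Rightarrow> nat \<Rightarrow> hist \<Rightarrow> (nat \<times> nat) list" where
  "run_machine S D M 0 h = []"
| "run_machine S D M (Suc f) h =
     (case M h of
        Write ws \<Rightarrow> (if length ws \<le> S then ws else [])
      | Query k \<Rightarrow> (let h' = h @ [(k, D k)] in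
                    if query_cost h' > S then [] else run_machine S D M f h'))"

definition machine_output :: "nat \<Rightarrow> dds \<Rightarrow> machine \<Rightarrow> (nat \<times> nat) list" where
  "machine_output S D M = run_machine S D M (Suc S) []"

definition write_positions :: "nat \<Rightarrow> dds \<Rightarrow> round \<Rightarrow> nat \<Rightarrow> (nat \<times> nat) set" where
  "write_positions S D rd k =
     {(m, j). j < length (machine_output S D (rd m)) \<and> fst (machine_output S D (rd m) ! j) = k}"

definition next_dds :: "nat \<Rightarrow> dds \<Rightarrow> round \<Rightarrow> dds" where
  "next_dds S D rd k =
     (if finite (write_positions S D rd k)
      then image_mset (\<lambda>(m, j). snd (machine_output S D (rd m) ! j))
             (mset_set (write_positions S D rd k))
      else {#})"

fun dds_after :: "nat \<Rightarrow> dds \<Rightarrow> alg \<Rightarrow> dds" where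
  "dds_after S D [] = D"
| "dds_after S D (rd # rds) = dds_after S (next_dds S D rd) rds"

definition dds0 :: "nat \<Rightarrow> (nat \<Rightarrow> bool) \<Rightarrow> dds" where
  "dds0 n x k = (if 1 \<le> k \<and> k \<le> n choose 2 then {# of_bool (x k) #} else {#})"

definition valid_ampc :: "nat \<Rightarrow> nat \<Rightarrow> alg \<Rightarrow> bool" where
  "valid_ampc n S A \<longleftrightarrow>
     (\<forall>x i k. i < length A \<longrightarrow>
        (let D = dds_after S (dds0 n x) (take i A) in
           finite (write_positions S D (A ! i) k) \<and> card (write_positions S D (A ! i) k) \<le> S))"

definition ampc_outputs :: "nat \<Rightarrow> nat \<Rightarrow> alg \<Rightarrow> (nat \<Rightarrow> bool) \<Rightarrow> nat \<Rightarrow> bool" where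
  "ampc_outputs n S A x b \<longleftrightarrow>
     (let D = dds_after S (dds0 n x) A in
        D answer_key = {#b#} \<and> (\<forall>k. k \<noteq> answer_key \<longrightarrow> D k = {#}))"

end

theory Submission
  imports Defs
begin

(* For y in {0,1}^L let G_y be the 2-lift of the L-cycle that switches sheets across the cycle
   edge p exactly when y p holds: G_y is a single 2L-cycle if y has odd parity and two disjoint
   L-cycles otherwise, and every input bit of G_y depends on a single bit of y.
   Along an AMPC computation on G_y, every indicator [D_r(k) = mu] is a multilinear polynomial
   in y of degree at most (S(S+1))^r: a machine makes at most S+1 adaptive queries, and at most S
   machines write under a key, which inclusion-exclusion over the set of writers turns into a
   polynomial of degree S times that of a single machine's output.  Parity is orthogonal to all
   polynomials of degree below L, so if (S(S+1))^R < L every deterministic algorithm is correct on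
   at most half of the G_y, and averaging over the randomness contradicts success probability 5/6.
   Hence n/2 <= (S(S+1))^R <= S^(3R). *)

section \<open>Multilinear polynomials on the Boolean cube\<close>

definition cube :: "nat \<Rightarrow> (nat \<Rightarrow> bool) set" where
  "cube m = {y. \<forall>i\<ge>m. \<not> y i}"

definition parity_char :: "nat \<Rightarrow> (nat \<Rightarrow> bool) \<Rightarrow> real" where
  "parity_char m y = (- 1) ^ card {i. i < m \<and> y i}"

(* f \<in> multilinear m d: on the cube {0,1}^m (bits beyond m are zero) f agrees with a real
   polynomial of degree at most d; of_bool (\<forall>i\<in>T. y i) is the monomial prod_(i in T) y_i. *)
inductive_set multilinear :: "nat \<Rightarrow> nat \<Rightarrow> ((nat \<Rightarrow> bool) \<Rightarrow> real) set" for m d where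
  monomial: "finite T \<Longrightarrow> card T \<le> d \<Longrightarrow> (\<lambda>y. c * of_bool (\<forall>i\<in>T. y i)) \<in> multilinear m d"
| add: "f \<in> multilinear m d \<Longrightarrow> g \<in> multilinear m d \<Longrightarrow> (\<lambda>y. f y + g y) \<in> multilinear m d"
| cong: "f \<in> multilinear m d \<Longrightarrow> (\<And>y. y \<in> cube m \<Longrightarrow> g y = f y) \<Longrightarrow> g \<in> multilinear m d"

lemma finite_cube: "finite (cube m)"
proof (rule finite_subset)
  show "cube m \<subseteq> (\<lambda>A i. i \<in> A) ` Pow {..<m}"
  proof
    fix y assume "y \<in> cube m"
    then have "y = (\<lambda>i. i \<in> {i. i < m \<and> y i})"
      by (auto simp: cube_def fun_eq_iff not_less[symmetric])
    then show "y \<in> (\<lambda>A i. i \<in> A) ` Pow {..<m}" by blast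
  qed
qed simp

lemma cube_nonempty: "cube m \<noteq> {}"
  by (auto simp: cube_def)

lemma multilinear_mono: "f \<in> multilinear m d \<Longrightarrow> d \<le> d' \<Longrightarrow> f \<in> multilinear m d'"
  by (induction rule: multilinear.induct) (auto intro: multilinear.intros)

lemma multilinear_const: "(\<lambda>y. c) \<in> multilinear m d"
  using multilinear.monomial[of "{}" d c m] by simp

lemma multilinear_scale: "f \<in> multilinear m d \<Longrightarrow> (\<lambda>y. c * f y) \<in> multilinear m d"
proof (induction rule: multilinear.induct)
  case (monomial T c')
  then show ?case
    using multilinear.monomial[of T d "c * c'" m] by (simp add: mult.assoc)
next
  case (add f g)
  then show ?case by (simp add: distrib_left multilinear.add)
qed (auto intro: multilinear.cong)

lemma multilinear_sum:
  "finite I \<Longrightarrow> (\<And>i. i \<in> I \<Longrightarrow> f i \<in> multilinear m d) \<Longrightarrow> (\<lambda>y. \<Sum>i\<in>I. f i y) \<in> multilinear m d"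
  by (induction I rule: finite_induct) (auto intro: multilinear.add multilinear_const)

lemma multilinear_mult_monomial:
  assumes "g \<in> multilinear m d2" "finite T" "card T \<le> d1"
  shows "(\<lambda>y. c * of_bool (\<forall>i\<in>T. y i) * g y) \<in> multilinear m (d1 + d2)"
  using assms(1)
proof (induction rule: multilinear.induct)
  case (monomial T' c')
  have "card (T \<union> T') \<le> d1 + d2"
    using card_Un_le[of T T'] monomial assms by linarith
  then have "(\<lambda>y. (c * c') * of_bool (\<forall>i\<in>T \<union> T'. y i)) \<in> multilinear m (d1 + d2)"
    using monomial assms by (intro multilinear.monomial) auto
  then show ?case
    by (rule multilinear.cong) auto
next
  case (add f g)
  then show ?case using multilinear.add[OF add.IH] by (simp add: distrib_left)
qed (auto intro: multilinear.cong)

lemma multilinear_mult: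
  "f \<in> multilinear m d1 \<Longrightarrow> g \<in> multilinear m d2 \<Longrightarrow> (\<lambda>y. f y * g y) \<in> multilinear m (d1 + d2)"
proof (induction rule: multilinear.induct)
  case (monomial T c)
  then show ?case by (intro multilinear_mult_monomial)
next
  case (add f f')
  then show ?case using multilinear.add[OF add.IH] by (simp add: distrib_right)
qed (auto intro: multilinear.cong)

lemma multilinear_one_coordinate:
  assumes "\<And>y y'. y j = y' j \<Longrightarrow> f y = f y'"
  shows "f \<in> multilinear m 1"
proof -
  let ?f1 = "f (\<lambda>i. i = j)" and ?f0 = "f (\<lambda>i. False)"
  have "(\<lambda>y. (?f1 - ?f0) * of_bool (\<forall>i\<in>{j}. y i) + ?f0) \<in> multilinear m 1"
    by (intro multilinear.add multilinear.monomial multilinear_const) auto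
  moreover have "f y = (?f1 - ?f0) * of_bool (\<forall>i\<in>{j}. y i) + ?f0" for y
    using assms[of y "\<lambda>i. i = j"] assms[of y "\<lambda>i. False"] by (cases "y j") auto
  ultimately show ?thesis by (rule multilinear.cong)
qed

lemma multilinear_case:
  assumes "\<And>v. (\<lambda>y. of_bool (F y = v)) \<in> multilinear m d1"
    and "\<And>v. G v \<in> multilinear m d2"
  shows "(\<lambda>y. G (F y) y) \<in> multilinear m (d1 + d2)"
proof -
  let ?V = "F ` cube m"
  have "(\<lambda>y. \<Sum>v\<in>?V. of_bool (F y = v) * G v y) \<in> multilinear m (d1 + d2)"
    using finite_cube by (intro multilinear_sum multilinear_mult assms) auto
  moreover have "G (F y) y = (\<Sum>v\<in>?V. of_bool (F y = v) * G v y)" if "y \<in> cube m" for y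
  proof -
    have "(\<Sum>v\<in>?V. of_bool (F y = v) * G v y) = (\<Sum>v\<in>?V. if v = F y then G v y else 0)"
      by (rule sum.cong) auto
    then show ?thesis using that finite_cube by simp
  qed
  ultimately show ?thesis by (rule multilinear.cong)
qed

lemma parity_char_flip:
  assumes "j < m"
  shows "parity_char m (y(j := \<not> y j)) = - parity_char m y"
proof -
  let ?A = "{i. i < m \<and> y i}"
  show ?thesis
  proof (cases "y j")
    case True
    then have flipped: "{i. i < m \<and> (y(j := \<not> y j)) i} = ?A - {j}" and "j \<in> ?A"
      using assms by auto
    then have card_A: "card ?A = Suc (card (?A - {j}))"
      by (intro card.remove) auto
    have "parity_char m y = - parity_char m (y(j := \<not> y j))"
      unfolding parity_char_def flipped card_A by simp
    then show ?thesis by simp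
  next
    case False
    then have "{i. i < m \<and> (y(j := \<not> y j)) i} = insert j ?A" and "j \<notin> ?A"
      using assms by auto
    then show ?thesis by (simp add: parity_char_def del: fun_upd_apply)
  qed
qed

lemma sum_parity_char_monomial:
  assumes "finite T" "card T < m"
  shows "(\<Sum>y\<in>cube m. parity_char m y * of_bool (\<forall>i\<in>T. y i)) = 0"
proof -
  obtain j where j: "j < m" "j \<notin> T"
    using assms card_mono[of T "{..<m}"] by force
  define flip where "flip y = y(j := \<not> y j)" for y :: "nat \<Rightarrow> bool"
  have "bij_betw flip (cube m) (cube m)"
    by (rule bij_betwI[of _ _ _ flip]) (use j in \<open>auto simp: flip_def cube_def\<close>)
  then have "(\<Sum>y\<in>cube m. parity_char m (flip y) * of_bool (\<forall>i\<in>T. flip y i))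
      = (\<Sum>y\<in>cube m. parity_char m y * of_bool (\<forall>i\<in>T. y i))"
    by (rule sum.reindex_bij_betw)
  moreover have "(\<forall>i\<in>T. flip y i) = (\<forall>i\<in>T. y i)" for y
    using j by (auto simp: flip_def)
  ultimately show ?thesis
    using parity_char_flip[OF j(1)] by (simp add: flip_def sum_negf)
qed

lemma sum_parity_char_multilinear:
  "f \<in> multilinear m d \<Longrightarrow> d < m \<Longrightarrow> (\<Sum>y\<in>cube m. parity_char m y * f y) = 0"
proof (induction rule: multilinear.induct)
  case (monomial T c)
  then show ?case
    using sum_parity_char_monomial[of T m] by (simp add: mult.left_commute flip: sum_distrib_left)
next
  case (add f g)
  then show ?case by (simp add: distrib_left sum.distrib)
next
  case (cong f g)
  then show ?case by (metis (no_types, lifting) sum.cong)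
qed

lemma sum_supersets_minus_one_power:
  assumes "finite X" "W \<subseteq> X"
  shows "(\<Sum>Z | W \<subseteq> Z \<and> Z \<subseteq> X. (- 1 :: real) ^ card Z) = of_bool (W = X) * (- 1) ^ card X"
proof (cases "W = X")
  case True
  then have "{Z. W \<subseteq> Z \<and> Z \<subseteq> X} = {X}" by auto
  then show ?thesis using True by simp
next
  case False
  then have "W \<subset> X" using assms by auto
  then have "card {Z. Z \<in> {Z. Z \<subseteq> X \<and> W \<subseteq> Z} \<and> even (card Z)}
      = card {Z. Z \<in> {Z. Z \<subseteq> X \<and> W \<subseteq> Z} \<and> odd (card Z)}"
    using card_subsupersets_even_odd[OF assms(1)] by (simp add: conj_assoc)
  then have "(\<Sum>Z | Z \<subseteq> X \<and> W \<subseteq> Z. (- 1 :: real) ^ card Z) = 0"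
    using assms(1) by (intro sum_alternating_cancels) auto
  then show ?thesis using False by (simp add: conj_commute)
qed

lemma of_bool_eq_sum_supersets:
  assumes "finite U" "X \<subseteq> U"
  shows "of_bool (X = W) =
    (\<Sum>Z | W \<subseteq> Z \<and> Z \<subseteq> U. (- 1 :: real) ^ (card W + card Z) * of_bool (Z \<subseteq> X))"
proof -
  have fin: "finite {Z. W \<subseteq> Z \<and> Z \<subseteq> U}"
    using assms by (auto intro: finite_subset[of _ "Pow U"])
  have restrict: "{Z \<in> {Z. W \<subseteq> Z \<and> Z \<subseteq> U}. Z \<subseteq> X} = {Z. W \<subseteq> Z \<and> Z \<subseteq> X}"
    using assms by auto
  have "(\<Sum>Z | W \<subseteq> Z \<and> Z \<subseteq> U. (- 1 :: real) ^ (card W + card Z) * of_bool (Z \<subseteq> X))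
      = (\<Sum>Z | W \<subseteq> Z \<and> Z \<subseteq> U. if Z \<subseteq> X then (- 1) ^ (card W + card Z) else 0)"
    by (rule sum.cong) auto
  also have "\<dots> = (\<Sum>Z | W \<subseteq> Z \<and> Z \<subseteq> X. (- 1) ^ (card W + card Z))"
    unfolding sum.inter_filter[OF fin, symmetric] restrict ..
  also have "\<dots> = (- 1) ^ card W * (\<Sum>Z | W \<subseteq> Z \<and> Z \<subseteq> X. (- 1) ^ card Z)"
    by (simp add: power_add sum_distrib_left)
  also have "\<dots> = of_bool (X = W)"
  proof (cases "W \<subseteq> X")
    case True
    then show ?thesis
      using sum_supersets_minus_one_power[OF finite_subset[OF assms(2,1)] True]
      by (cases "W = X") simp_all
  next
    case False
    then have no_supersets: "{Z. W \<subseteq> Z \<and> Z \<subseteq> X} = {}" by auto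
    show ?thesis unfolding no_supersets using False by auto
  qed
  finally show ?thesis by (rule sym)
qed

section \<open>AMPC computations are low-degree polynomials of the input\<close>

lemma multilinear_restrict_outputs:
  assumes "finite V" and "\<And>M v. M \<in> V \<Longrightarrow> (\<lambda>y. of_bool (out M y = v)) \<in> multilinear m e"
  shows "(\<lambda>y. of_bool (Q (restrict (\<lambda>M. out M y) V))) \<in> multilinear m (card V * e)"
  using assms
proof (induction V arbitrary: Q rule: finite_induct)
  case empty
  show ?case using multilinear_const[of "of_bool (Q (\<lambda>_. undefined))"] by simp
next
  case (insert a V)
  have "(\<lambda>y. of_bool (Q ((restrict (\<lambda>M. out M y) V)(a := out a y)))) \<in> multilinear m (e + card V * e)"
    using insert by (intro multilinear_case[where F = "out a"]) auto
  moreover have "(restrict (\<lambda>M. out M y) V)(a := out a y) = restrict (\<lambda>M. out M y) (insert a V)" for y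
    by (auto simp: restrict_def)
  ultimately have "(\<lambda>y. of_bool (Q (restrict (\<lambda>M. out M y) (insert a V))))
      \<in> multilinear m (e + card V * e)"
    by (simp only:)
  then show ?case by (simp only: card_insert_disjoint[OF insert.hyps] mult_Suc)
qed

lemma multilinear_writers_superset:
  fixes out :: "'a \<Rightarrow> (nat \<Rightarrow> bool) \<Rightarrow> 'b"
  assumes "finite U" and "W \<subseteq> Z" "Z \<subseteq> U"
    and writers: "\<And>y. y \<in> cube m \<Longrightarrow> card {M \<in> U. wr (out M y)} \<le> S"
    and outputs: "\<And>M v. M \<in> U \<Longrightarrow> (\<lambda>y. of_bool (out M y = v)) \<in> multilinear m e"
  shows "(\<lambda>y. of_bool (Z \<subseteq> {M \<in> U. wr (out M y)} \<and> \<Phi> W (restrict (\<lambda>M. out M y) W)))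
    \<in> multilinear m (S * e)"
proof (cases "card Z \<le> S")
  case True
  define Q where "Q \<tau> \<longleftrightarrow> (\<forall>M\<in>Z. wr (\<tau> M)) \<and> \<Phi> W (restrict \<tau> W)" for \<tau>
  have "(\<lambda>y. of_bool (Q (restrict (\<lambda>M. out M y) Z))) \<in> multilinear m (card Z * e)"
    using assms by (intro multilinear_restrict_outputs outputs) (auto dest: finite_subset)
  moreover have "Z \<subseteq> {M \<in> U. wr (out M y)} \<and> \<Phi> W (restrict (\<lambda>M. out M y) W)
      \<longleftrightarrow> Q (restrict (\<lambda>M. out M y) Z)" for y
  proof -
    have "restrict (restrict (\<lambda>M. out M y) Z) W = restrict (\<lambda>M. out M y) W"
      using \<open>W \<subseteq> Z\<close> by (simp add: Int_absorb1)
    moreover have "Z \<subseteq> {M \<in> U. wr (out M y)} \<longleftrightarrow> (\<forall>M\<in>Z. wr (restrict (\<lambda>M. out M y) Z M))"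
      using \<open>Z \<subseteq> U\<close> by auto
    ultimately show ?thesis by (simp add: Q_def)
  qed
  ultimately show ?thesis
    using True by (simp add: multilinear_mono)
next
  case False
  have "card {M \<in> U. wr (out M y)} < card Z" if "y \<in> cube m" for y
    using writers[OF that] False by simp
  then have "\<not> Z \<subseteq> {M \<in> U. wr (out M y)}" if "y \<in> cube m" for y
    using that \<open>finite U\<close> card_mono[of "{M \<in> U. wr (out M y)}" Z] by fastforce
  then show ?thesis by (intro multilinear.cong[OF multilinear_const[of 0]]) auto
qed

(* Inclusion-exclusion writes [Wr = W] as an alternating sum of [Z \<subseteq> Wr] over Z \<supseteq> W; the terms
   with card Z > S vanish, and the others depend on the outputs of card Z \<le> S machines. *)
lemma multilinear_few_writers:
  fixes out :: "'a \<Rightarrow> (nat \<Rightarrow> bool) \<Rightarrow> 'b"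
  assumes "finite U"
    and writers: "\<And>y. y \<in> cube m \<Longrightarrow> card {M \<in> U. wr (out M y)} \<le> S"
    and outputs: "\<And>M v. M \<in> U \<Longrightarrow> (\<lambda>y. of_bool (out M y = v)) \<in> multilinear m e"
  shows "(\<lambda>y. of_bool (\<Phi> {M \<in> U. wr (out M y)} (restrict (\<lambda>M. out M y) {M \<in> U. wr (out M y)})))
    \<in> multilinear m (S * e)"
proof -
  define Wr where "Wr y = {M \<in> U. wr (out M y)}" for y
  define T :: "'a set \<Rightarrow> 'a set \<Rightarrow> (nat \<Rightarrow> bool) \<Rightarrow> real"
    where "T W Z y = of_bool (Z \<subseteq> Wr y \<and> \<Phi> W (restrict (\<lambda>M. out M y) W))" for W Z y
  have "(\<lambda>y. \<Sum>W\<in>Pow U. \<Sum>Z | W \<subseteq> Z \<and> Z \<subseteq> U. (- 1) ^ (card W + card Z) * T W Z y)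
    \<in> multilinear m (S * e)"
    using assms finite_subset[of _ "Pow U"] unfolding T_def Wr_def
    by (intro multilinear_sum multilinear_scale multilinear_writers_superset) auto
  moreover have "of_bool (\<Phi> (Wr y) (restrict (\<lambda>M. out M y) (Wr y)))
      = (\<Sum>W\<in>Pow U. \<Sum>Z | W \<subseteq> Z \<and> Z \<subseteq> U. (- 1) ^ (card W + card Z) * T W Z y)" for y
  proof -
    have "Wr y \<subseteq> U" by (auto simp: Wr_def)
    have "(\<Sum>Z | W \<subseteq> Z \<and> Z \<subseteq> U. (- 1) ^ (card W + card Z) * T W Z y)
        = of_bool (\<Phi> W (restrict (\<lambda>M. out M y) W)) * of_bool (Wr y = W)" for W
      unfolding of_bool_eq_sum_supersets[OF \<open>finite U\<close> \<open>Wr y \<subseteq> U\<close>, of W] T_def of_bool_conj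
      by (simp add: sum_distrib_left mult_ac)
    then have "(\<Sum>W\<in>Pow U. \<Sum>Z | W \<subseteq> Z \<and> Z \<subseteq> U. (- 1) ^ (card W + card Z) * T W Z y)
        = (\<Sum>W\<in>Pow U. if W = Wr y then of_bool (\<Phi> W (restrict (\<lambda>M. out M y) W)) else 0)"
      by (intro sum.cong) auto
    also have "\<dots> = of_bool (\<Phi> (Wr y) (restrict (\<lambda>M. out M y) (Wr y)))"
      using \<open>finite U\<close> \<open>Wr y \<subseteq> U\<close> by (simp add: sum.delta)
    finally show ?thesis by (rule sym)
  qed
  ultimately show ?thesis unfolding Wr_def by (rule multilinear.cong)
qed

lemma multilinear_run_machine:
  assumes "\<And>k \<mu>. (\<lambda>y. of_bool (D y k = \<mu>)) \<in> multilinear m e"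
  shows "(\<lambda>y. of_bool (run_machine S (D y) M f h = ov)) \<in> multilinear m (f * e)"
proof (induction f arbitrary: h ov)
  case 0
  show ?case using multilinear_const[of "of_bool ([] = ov)"] by simp
next
  case (Suc f)
  show ?case
  proof (cases "M h")
    case (Write ws)
    show ?thesis
      using multilinear_const[of "of_bool ((if length ws \<le> S then ws else []) = ov)"]
      by (simp add: Write)
  next
    case (Query k)
    define continue where "continue \<mu> y = (if S < query_cost (h @ [(k, \<mu>)]) then []
        else run_machine S (D y) M f (h @ [(k, \<mu>)]))" for \<mu> y
    have "(\<lambda>y. of_bool (continue \<mu> y = ov)) \<in> multilinear m (f * e)" for \<mu>
      by (cases "S < query_cost (h @ [(k, \<mu>)])") (simp_all add: continue_def Suc.IH multilinear_const)
    then have "(\<lambda>y. of_bool (continue (D y k) y = ov)) \<in> multilinear m (e + f * e)"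
      by (intro multilinear_case[where F = "\<lambda>y. D y k"] assms)
    then show ?thesis by (simp add: Query continue_def Let_def)
  qed
qed


definition writing_machines :: "nat \<Rightarrow> dds \<Rightarrow> round \<Rightarrow> nat \<Rightarrow> nat set" where
  "writing_machines S D rd k = {M. \<exists>j<length (machine_output S D (rd M)). fst (machine_output S D (rd M) ! j) = k}"

definition collect_writes :: "nat \<Rightarrow> nat set \<Rightarrow> (nat \<Rightarrow> (nat \<times> nat) list) \<Rightarrow> nat multiset" where
  "collect_writes k W \<tau> = image_mset (\<lambda>(M, j). snd (\<tau> M ! j))
      (mset_set {(M, j). M \<in> W \<and> j < length (\<tau> M) \<and> fst (\<tau> M ! j) = k})"

lemma write_positions_eq:
  "write_positions S D rd k = {(M, j). M \<in> writing_machines S D rd k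
      \<and> j < length (machine_output S D (rd M)) \<and> fst (machine_output S D (rd M) ! j) = k}"
  by (auto simp: write_positions_def writing_machines_def)

lemma writing_machines_bounded:
  assumes "finite (write_positions S D rd k)" "card (write_positions S D rd k) \<le> S"
  shows "finite (writing_machines S D rd k)" "card (writing_machines S D rd k) \<le> S"
proof -
  have "writing_machines S D rd k = fst ` write_positions S D rd k"
    by (force simp: write_positions_def writing_machines_def)
  then show "finite (writing_machines S D rd k)" "card (writing_machines S D rd k) \<le> S"
    using assms card_image_le[of "write_positions S D rd k" fst] by auto
qed

lemma next_dds_eq_collect_writes:
  assumes "finite (write_positions S D rd k)"
  shows "next_dds S D rd k = collect_writes k (writing_machines S D rd k)
    (restrict (\<lambda>M. machine_output S D (rd M)) (writing_machines S D rd k))"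
proof -
  let ?W = "writing_machines S D rd k" and ?out = "\<lambda>M. machine_output S D (rd M)"
  have "next_dds S D rd k = image_mset (\<lambda>(M, j). snd (?out M ! j)) (mset_set (write_positions S D rd k))"
    using assms by (simp add: next_dds_def)
  also have "\<dots> = image_mset (\<lambda>(M, j). snd (restrict ?out ?W M ! j)) (mset_set (write_positions S D rd k))"
    by (rule image_mset_cong) (use assms in \<open>auto simp: write_positions_eq\<close>)
  also have "\<dots> = collect_writes k ?W (restrict ?out ?W)"
    unfolding collect_writes_def write_positions_eq
    by (rule arg_cong[where f = "\<lambda>A. image_mset _ (mset_set A)"]) auto
  finally show ?thesis .
qed

lemma multilinear_next_dds:
  fixes D :: "(nat \<Rightarrow> bool) \<Rightarrow> dds"
  assumes bounded: "\<And>y. y \<in> cube m \<Longrightarrow>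
      finite (write_positions S (D y) rd k) \<and> card (write_positions S (D y) rd k) \<le> S"
    and entries: "\<And>k \<mu>. (\<lambda>y. of_bool (D y k = \<mu>)) \<in> multilinear m e"
  shows "(\<lambda>y. of_bool (next_dds S (D y) rd k = \<mu>)) \<in> multilinear m (S * ((S + 1) * e))"
proof -
  define out where "out M y = machine_output S (D y) (rd M)" for M y
  define wr where "wr ov \<longleftrightarrow> (\<exists>j<length ov. fst (ov ! j) = k)" for ov :: "(nat \<times> nat) list"
  define U where "U = (\<Union>y\<in>cube m. writing_machines S (D y) rd k)"
  have "finite U"
    using finite_cube writing_machines_bounded(1) bounded by (auto simp: U_def)
  have writers: "writing_machines S (D y) rd k = {M \<in> U. wr (out M y)}" if "y \<in> cube m" for y
    using that by (auto simp: U_def writing_machines_def out_def wr_def)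
  have "(\<lambda>y. of_bool (collect_writes k {M \<in> U. wr (out M y)}
      (restrict (\<lambda>M. out M y) {M \<in> U. wr (out M y)}) = \<mu>)) \<in> multilinear m (S * ((S + 1) * e))"
  proof (rule multilinear_few_writers[OF \<open>finite U\<close>])
    show "card {M \<in> U. wr (out M y)} \<le> S" if "y \<in> cube m" for y
    proof -
      have "card (writing_machines S (D y) rd k) \<le> S"
        using bounded[OF that] by (blast intro: writing_machines_bounded(2))
      then show ?thesis using writers[OF that] by simp
    qed
    show "(\<lambda>y. of_bool (out M y = v)) \<in> multilinear m ((S + 1) * e)" for M v
    proof -
      have "(\<lambda>y. of_bool (run_machine S (D y) (rd M) (Suc S) [] = v)) \<in> multilinear m (Suc S * e)"
        by (rule multilinear_run_machine[OF entries])
      then show ?thesis by (simp only: out_def machine_output_def Suc_eq_plus1)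
    qed
  qed
  then show ?thesis
    by (rule multilinear.cong) (simp add: next_dds_eq_collect_writes bounded writers out_def)
qed

lemma dds_after_snoc: "dds_after S D (rds @ [rd]) = next_dds S (dds_after S D rds) rd"
  by (induction rds arbitrary: D) auto

lemma multilinear_dds_after:
  assumes valid: "valid_ampc n S A"
    and local_input: "\<And>k. \<exists>j. \<forall>y y'. y j = y' j \<longrightarrow> x y k = x y' k"
  shows "r \<le> length A \<Longrightarrow>
    (\<lambda>y. of_bool (dds_after S (dds0 n (x y)) (take r A) k = \<mu>)) \<in> multilinear m ((S * (S + 1)) ^ r)"
proof (induction r arbitrary: k \<mu>)
  case 0
  obtain j where j: "\<forall>y y'. y j = y' j \<longrightarrow> x y k = x y' k"
    using local_input by blast
  have "(\<lambda>y. of_bool (dds0 n (x y) k = \<mu>)) \<in> multilinear m 1"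
  proof (rule multilinear_one_coordinate)
    fix y y' :: "nat \<Rightarrow> bool"
    assume "y j = y' j"
    then have "x y k = x y' k" using j by blast
    then show "of_bool (dds0 n (x y) k = \<mu>) = (of_bool (dds0 n (x y') k = \<mu>) :: real)"
      by (simp add: dds0_def)
  qed
  then show ?case by simp
next
  case (Suc r)
  then have "r < length A" by simp
  have "(\<lambda>y. of_bool (next_dds S (dds_after S (dds0 n (x y)) (take r A)) (A ! r) k = \<mu>))
      \<in> multilinear m (S * ((S + 1) * (S * (S + 1)) ^ r))"
  proof (rule multilinear_next_dds)
    show "finite (write_positions S (dds_after S (dds0 n (x y)) (take r A)) (A ! r) k)
      \<and> card (write_positions S (dds_after S (dds0 n (x y)) (take r A)) (A ! r) k) \<le> S" for y
      using valid[unfolded valid_ampc_def Let_def, rule_format, OF \<open>r < length A\<close>] .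
    show "(\<lambda>y. of_bool (dds_after S (dds0 n (x y)) (take r A) k' = \<mu>')) \<in> multilinear m ((S * (S + 1)) ^ r)"
      for k' \<mu>'
      using Suc \<open>r < length A\<close> by simp
  qed
  moreover have "take (Suc r) A = take r A @ [A ! r]"
    using \<open>r < length A\<close> by (rule take_Suc_conv_app_nth)
  moreover have "(S * (S + 1)) ^ Suc r = S * ((S + 1) * (S * (S + 1)) ^ r)"
    by (simp only: power_Suc mult.assoc)
  ultimately show ?case by (simp only: dds_after_snoc)
qed

section \<open>The hard inputs: 2-lifts of a cycle\<close>

lemma cycle_edges_map_upt:
  assumes "f N = f 0"
  shows "cycle_edges (map f [0..<N]) = (\<lambda>i. {f i, f (Suc i)}) ` {..<N}"
proof -
  have "cycle_edges vs = (\<lambda>i. {vs ! i, vs ! (Suc i mod length vs)}) ` {..<length vs}" for vs :: "nat list"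
    by (auto simp: cycle_edges_def)
  then have "cycle_edges (map f [0..<N])
      = (\<lambda>i. {map f [0..<N] ! i, map f [0..<N] ! (Suc i mod N)}) ` {..<N}"
    by simp
  also have "\<dots> = (\<lambda>i. {f i, f (Suc i)}) ` {..<N}"
  proof (rule image_cong)
    fix i assume "i \<in> {..<N}"
    then have "f (Suc i mod N) = f (Suc i)"
      using assms by (cases "Suc i = N") auto
    then show "{map f [0..<N] ! i, map f [0..<N] ! (Suc i mod N)} = {f i, f (Suc i)}"
      using \<open>i \<in> {..<N}\<close> by simp
  qed simp
  finally show ?thesis .
qed

lemma cycle_edges_subset:
  assumes "e \<in> cycle_edges vs"
  shows "e \<subseteq> set vs"
proof -
  obtain i where i: "i < length vs" "e = {vs ! i, vs ! ((i + 1) mod length vs)}"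
    using assms by (auto simp: cycle_edges_def)
  moreover have "(i + 1) mod length vs < length vs"
    using i(1) by (intro mod_less_divisor) linarith
  ultimately show ?thesis by (simp add: nth_mem)
qed

lemma cycle_vertices_same_side:
  assumes "\<forall>e\<in>cycle_edges vs. e \<subseteq> A \<or> e \<inter> A = {}" and "i < length vs"
  shows "vs ! i \<in> A \<longleftrightarrow> vs ! 0 \<in> A"
  using assms(2)
proof (induction i)
  case (Suc i)
  have "{vs ! i, vs ! ((i + 1) mod length vs)} \<in> cycle_edges vs"
    using Suc.prems unfolding cycle_edges_def by auto
  moreover have "(i + 1) mod length vs = Suc i"
    using Suc.prems by simp
  ultimately have "{vs ! i, vs ! Suc i} \<in> cycle_edges vs"
    by simp
  then have "{vs ! i, vs ! Suc i} \<subseteq> A \<or> {vs ! i, vs ! Suc i} \<inter> A = {}"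
    by (rule bspec[OF assms(1)])
  then have "vs ! Suc i \<in> A \<longleftrightarrow> vs ! i \<in> A"
    by auto
  then show ?case using Suc by simp
qed simp

(* Vertex (p, t) of the 2-lift sits in column p < L of the cycle and on sheet t; the edge leaving
   column p on sheet t switches sheets iff the bit c = y p is set.  The walk of j steps from
   column 0 on sheet b ends on sheet b xor sheet L y j. *)
definition cover_vertex :: "nat \<Rightarrow> nat \<Rightarrow> bool \<Rightarrow> nat" where
  "cover_vertex L p t = (if t then L + p + 1 else p + 1)"

definition cover_edge :: "nat \<Rightarrow> nat \<Rightarrow> bool \<Rightarrow> bool \<Rightarrow> nat set" where
  "cover_edge L p t c = {cover_vertex L p t, cover_vertex L (Suc p mod L) (t \<noteq> c)}"

definition cover_edges :: "nat \<Rightarrow> (nat \<Rightarrow> bool) \<Rightarrow> nat set set" where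
  "cover_edges L y = {cover_edge L p t (y p) | p t. p < L}"

definition sheet :: "nat \<Rightarrow> (nat \<Rightarrow> bool) \<Rightarrow> nat \<Rightarrow> bool" where
  "sheet L y j = odd (card {i. i < j \<and> y (i mod L)})"

definition cover_walk :: "nat \<Rightarrow> (nat \<Rightarrow> bool) \<Rightarrow> bool \<Rightarrow> nat \<Rightarrow> nat" where
  "cover_walk L y b j = cover_vertex L (j mod L) (sheet L y j \<noteq> b)"

lemma sheet_0 [simp]: "\<not> sheet L y 0"
  by (simp add: sheet_def)

lemma sheet_Suc: "sheet L y (Suc j) = (sheet L y j \<noteq> y (j mod L))"
proof -
  have "{i. i < Suc j \<and> y (i mod L)} = (if y (j mod L) then insert j else id) {i. i < j \<and> y (i mod L)}"
    by (auto simp: less_Suc_eq)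
  then show ?thesis by (simp add: sheet_def)
qed

lemma sheet_add_period: "sheet L y (j + L) = (sheet L y j \<noteq> sheet L y L)"
  by (induction j) (auto simp: sheet_Suc)

lemma cover_walk_add_period: "cover_walk L y b (j + L) = cover_walk L y (b \<noteq> sheet L y L) j"
  unfolding cover_walk_def sheet_add_period mod_add_self2
  by (rule arg_cong[where f = "cover_vertex L (j mod L)"]) blast

lemma cover_walk_step:
  "{cover_walk L y b j, cover_walk L y b (Suc j)} = cover_edge L (j mod L) (sheet L y j \<noteq> b) (y (j mod L))"
proof -
  have "(sheet L y (Suc j) \<noteq> b) = ((sheet L y j \<noteq> b) \<noteq> y (j mod L))"
    by (auto simp: sheet_Suc)
  then show ?thesis by (simp only: cover_walk_def cover_edge_def mod_Suc_eq)
qed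

lemma cover_vertex_eq_iff:
  "p < L \<Longrightarrow> p' < L \<Longrightarrow> cover_vertex L p t = cover_vertex L p' t' \<longleftrightarrow> p = p' \<and> t = t'"
  by (auto simp: cover_vertex_def)

lemma cover_vertex_surj: "{1..2 * L} = {cover_vertex L p t | p t. p < L}"
proof (intro equalityI subsetI)
  fix v assume v: "v \<in> {1..2 * L}"
  show "v \<in> {cover_vertex L p t | p t. p < L}"
  proof (cases "v \<le> L")
    case True
    then have "v = cover_vertex L (v - 1) False" "v - 1 < L" using v by (auto simp: cover_vertex_def)
    then show ?thesis by blast
  next
    case False
    then have "v = cover_vertex L (v - L - 1) True" "v - L - 1 < L" using v by (auto simp: cover_vertex_def)
    then show ?thesis by blast
  qed
qed (auto simp: cover_vertex_def)

definition cover_cycle :: "nat \<Rightarrow> (nat \<Rightarrow> bool) \<Rightarrow> bool \<Rightarrow> nat list" where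
  "cover_cycle L y b = map (cover_walk L y b) [0..<L]"

lemma length_cover_cycle [simp]: "length (cover_cycle L y b) = L"
  by (simp add: cover_cycle_def)

lemma cycle_edges_cover_walk:
  assumes "cover_walk L y b N = cover_walk L y b 0"
  shows "cycle_edges (map (cover_walk L y b) [0..<N])
    = (\<lambda>i. cover_edge L (i mod L) (sheet L y i \<noteq> b) (y (i mod L))) ` {..<N}"
  unfolding cycle_edges_map_upt[of "cover_walk L y b", OF assms] cover_walk_step ..

lemma cycle_edges_cover_cycles_even:
  assumes "\<not> sheet L y L"
  shows "cycle_edges (cover_cycle L y False) \<union> cycle_edges (cover_cycle L y True) = cover_edges L y"
proof -
  have periodic: "cover_walk L y b L = cover_walk L y b 0" for b
    using cover_walk_add_period[of L y b 0] assms by simp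
  have cycles: "cycle_edges (cover_cycle L y b) = (\<lambda>p. cover_edge L p (sheet L y p \<noteq> b) (y p)) ` {..<L}" for b
    unfolding cover_cycle_def cycle_edges_cover_walk[OF periodic] by (intro image_cong) auto
  show ?thesis
  proof (intro equalityI subsetI)
    fix e assume "e \<in> cycle_edges (cover_cycle L y False) \<union> cycle_edges (cover_cycle L y True)"
    then show "e \<in> cover_edges L y" unfolding cycles cover_edges_def by auto
  next
    fix e assume "e \<in> cover_edges L y"
    then obtain p t where "p < L" and e: "e = cover_edge L p t (y p)" by (auto simp: cover_edges_def)
    have "(sheet L y p \<noteq> (sheet L y p \<noteq> t)) = t" by blast
    with e have "e = cover_edge L p (sheet L y p \<noteq> (sheet L y p \<noteq> t)) (y p)" by simp
    then have "e \<in> cycle_edges (cover_cycle L y (sheet L y p \<noteq> t))"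
      unfolding cycles using \<open>p < L\<close> by blast
    then show "e \<in> cycle_edges (cover_cycle L y False) \<union> cycle_edges (cover_cycle L y True)"
      by (metis (full_types) UnCI)
  qed
qed

lemma cover_cycles_append_odd:
  assumes "sheet L y L"
  shows "cover_cycle L y False @ cover_cycle L y True = map (cover_walk L y False) [0..<2 * L]"
proof -
  have "[0..<2 * L] = [0..<L] @ map (\<lambda>i. i + L) [0..<L]"
    by (simp add: map_add_upt upt_add_eq_append[of 0 L L, simplified] mult_2)
  moreover have "cover_walk L y False (i + L) = cover_walk L y True i" for i
    using cover_walk_add_period[of L y False i] assms by simp
  ultimately show ?thesis by (simp add: cover_cycle_def comp_def)
qed

lemma cycle_edges_cover_cycles_odd:
  assumes "sheet L y L"
  shows "cycle_edges (cover_cycle L y False @ cover_cycle L y True) = cover_edges L y"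
proof -
  have "cover_walk L y False (L + L) = cover_walk L y False 0"
    using cover_walk_add_period[of L y False L] cover_walk_add_period[of L y True 0] assms by simp
  then have cycle: "cycle_edges (cover_cycle L y False @ cover_cycle L y True)
      = (\<lambda>i. cover_edge L (i mod L) (sheet L y i) (y (i mod L))) ` {..<2 * L}"
    unfolding cover_cycles_append_odd[OF assms] by (simp add: cycle_edges_cover_walk mult_2)
  show ?thesis
  proof (intro equalityI subsetI)
    fix e assume "e \<in> cycle_edges (cover_cycle L y False @ cover_cycle L y True)"
    then obtain i where "i < 2 * L" "e = cover_edge L (i mod L) (sheet L y i) (y (i mod L))"
      unfolding cycle by auto
    moreover have "i mod L < L" using \<open>i < 2 * L\<close> by simp
    ultimately show "e \<in> cover_edges L y" unfolding cover_edges_def by blast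
  next
    fix e assume "e \<in> cover_edges L y"
    then obtain p t where "p < L" and e: "e = cover_edge L p t (y p)" by (auto simp: cover_edges_def)
    then have shifted: "sheet L y (p + L) = (\<not> sheet L y p)" "(p + L) mod L = p" "p + L < 2 * L"
      using sheet_add_period[of L y p] assms by auto
    have "\<exists>i. i < 2 * L \<and> i mod L = p \<and> sheet L y i = t"
    proof (cases "sheet L y p = t")
      case True
      then show ?thesis using \<open>p < L\<close> by (intro exI[of _ p]) auto
    next
      case False
      then show ?thesis using shifted by (intro exI[of _ "p + L"]) auto
    qed
    then obtain i where "i < 2 * L" "i mod L = p" "sheet L y i = t" by blast
    then show "e \<in> cycle_edges (cover_cycle L y False @ cover_cycle L y True)"
      unfolding cycle e by auto
  qed
qed

lemma distinct_cover_cycles: "distinct (cover_cycle L y False @ cover_cycle L y True)"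
  by (auto simp: cover_cycle_def cover_walk_def distinct_map inj_on_def cover_vertex_eq_iff)

lemma set_cover_cycles: "set (cover_cycle L y False @ cover_cycle L y True) = {1..2 * L}"
proof -
  have "cover_vertex L p t \<in> set (cover_cycle L y (sheet L y p \<noteq> t))" if "p < L" for p t
  proof -
    have "(sheet L y p \<noteq> (sheet L y p \<noteq> t)) = t" by blast
    then have "cover_vertex L p t = cover_walk L y (sheet L y p \<noteq> t) p"
      using that by (simp add: cover_walk_def)
    then show ?thesis using that by (simp add: cover_cycle_def)
  qed
  then have "{cover_vertex L p t | p t. p < L} \<subseteq> set (cover_cycle L y False @ cover_cycle L y True)"
    by (auto, metis (full_types))
  moreover have "set (cover_cycle L y False @ cover_cycle L y True) \<subseteq> {cover_vertex L p t | p t. p < L}"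
    by (auto simp: cover_cycle_def cover_walk_def)
  ultimately show ?thesis unfolding cover_vertex_surj by blast
qed

lemma not_single_cycle_cover_edges:
  assumes "\<not> sheet L y L" and "0 < L"
  shows "\<not> single_cycle (2 * L) (cover_edges L y)"
proof
  assume "single_cycle (2 * L) (cover_edges L y)"
  then obtain vs where vs: "set vs = {1..2 * L}" "cover_edges L y = cycle_edges vs"
    unfolding single_cycle_def by blast
  let ?A = "set (cover_cycle L y False)" and ?B = "set (cover_cycle L y True)"
  have "?A \<inter> ?B = {}"
    using distinct_cover_cycles[of L y] by simp
  then have "\<forall>e\<in>cycle_edges vs. e \<subseteq> ?A \<or> e \<inter> ?A = {}"
    using cycle_edges_cover_cycles_even[OF assms(1)] vs(2) cycle_edges_subset by blast
  note same_side = cycle_vertices_same_side[OF this]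
  have "cover_vertex L 0 False \<in> ?A" "cover_vertex L 0 True \<in> ?B"
    using assms by (force simp: cover_cycle_def cover_walk_def)+
  moreover have "cover_vertex L 0 False \<in> set vs" "cover_vertex L 0 True \<in> set vs"
    unfolding vs(1) using assms(2) by (auto simp: cover_vertex_def)
  ultimately show False
    using same_side \<open>?A \<inter> ?B = {}\<close> by (metis disjoint_iff in_set_conv_nth)
qed

lemma single_cycle_cover_edges:
  assumes "3 \<le> L" and "sheet L y L"
  shows "single_cycle (2 * L) (cover_edges L y)"
  unfolding single_cycle_def
  using distinct_cover_cycles set_cover_cycles cycle_edges_cover_cycles_odd[OF assms(2)] assms(1)
  by (intro exI[of _ "cover_cycle L y False @ cover_cycle L y True"]) simp

lemma two_cycles_cover_edges:
  assumes "3 \<le> L" and "\<not> sheet L y L"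
  shows "two_cycles (2 * L) (cover_edges L y)"
  unfolding two_cycles_def
  using distinct_cover_cycles set_cover_cycles cycle_edges_cover_cycles_even[OF assms(2)] assms(1)
  by (intro exI[of _ "cover_cycle L y False"] exI[of _ "cover_cycle L y True"]) simp

lemma cover_edge_column_unique:
  assumes "3 \<le> L" "p < L" "p' < L" "cover_edge L p t c = cover_edge L p' t' c'"
  shows "p = p'"
proof -
  have columns: "(\<lambda>v. (v - 1) mod L) ` cover_edge L q s d = {q, Suc q mod L}" if "q < L" for q s d
    using that by (auto simp: cover_edge_def cover_vertex_def)
  have "{p, Suc p mod L} = {p', Suc p' mod L}"
    using columns[OF assms(2)] columns[OF assms(3)] assms(4) by metis
  moreover have "Suc (Suc p mod L) mod L \<noteq> p"
    using assms(1,2) by (auto simp: mod_Suc_eq mod_if)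
  ultimately show ?thesis
    by (auto simp: doubleton_eq_iff)
qed

lemma cover_edges_local:
  assumes "3 \<le> L"
  shows "\<exists>j. \<forall>y y'. y j = y' j \<longrightarrow> (e \<in> cover_edges L y \<longleftrightarrow> e \<in> cover_edges L y')"
proof (cases "\<exists>p t c. p < L \<and> e = cover_edge L p t c")
  case True
  then obtain p t c where p: "p < L" "e = cover_edge L p t c" by blast
  have column_p: "e \<in> cover_edges L y \<longleftrightarrow> (\<exists>t. e = cover_edge L p t (y p))" for y
    using cover_edge_column_unique[OF assms] p unfolding cover_edges_def by blast
  show ?thesis
  proof (intro exI[of _ p] allI impI)
    fix y y' :: "nat \<Rightarrow> bool"
    assume "y p = y' p"
    then show "e \<in> cover_edges L y \<longleftrightarrow> e \<in> cover_edges L y'" by (simp only: column_p)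
  qed
next
  case False
  then have "e \<notin> cover_edges L y" for y unfolding cover_edges_def by blast
  then show ?thesis by (intro exI[of _ 0]) simp
qed

lemma cover_edges_subset_pairs:
  assumes "2 \<le> L"
  shows "cover_edges L y \<subseteq> {{u, v} | u v. u \<in> {1..2 * L} \<and> v \<in> {1..2 * L} \<and> u \<noteq> v}"
proof
  fix e assume "e \<in> cover_edges L y"
  then obtain p t where p: "p < L" "e = cover_edge L p t (y p)" by (auto simp: cover_edges_def)
  let ?u = "cover_vertex L p t" and ?v = "cover_vertex L (Suc p mod L) (t \<noteq> y p)"
  have "Suc p mod L < L" "Suc p mod L \<noteq> p"
    using assms p(1) by (auto simp: mod_Suc)
  then have "?u \<noteq> ?v"
    using cover_vertex_eq_iff[OF p(1)] by simp
  moreover have "?u \<in> {1..2 * L}" "?v \<in> {1..2 * L}"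
    using cover_vertex_surj[of L] p(1) \<open>Suc p mod L < L\<close> by blast+
  ultimately show "e \<in> {{u, v} | u v. u \<in> {1..2 * L} \<and> v \<in> {1..2 * L} \<and> u \<noteq> v}"
    unfolding p(2) cover_edge_def by blast
qed

lemma parity_char_sheet: "parity_char L y = (if sheet L y L then - 1 else 1)"
proof -
  have "{i. i < L \<and> y (i mod L)} = {i. i < L \<and> y i}" by auto
  then show ?thesis by (simp add: parity_char_def sheet_def minus_one_power_iff)
qed

lemma edges_of_indicator:
  assumes "bij_betw pair_of {1..n choose 2} P" and "E \<subseteq> P"
  shows "edges_of n pair_of (\<lambda>i. pair_of i \<in> E) = E"
proof (intro equalityI subsetI)
  fix e assume "e \<in> edges_of n pair_of (\<lambda>i. pair_of i \<in> E)"
  then show "e \<in> E" by (auto simp: edges_of_def)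
next
  fix e assume "e \<in> E"
  then obtain i where "i \<in> {1..n choose 2}" "e = pair_of i"
    using assms bij_betw_imp_surj_on by blast
  then show "e \<in> edges_of n pair_of (\<lambda>i. pair_of i \<in> E)"
    using \<open>e \<in> E\<close> unfolding edges_of_def by blast
qed

lemma (in prob_space) sum_prob_le:
  assumes "finite I" and "\<And>i. i \<in> I \<Longrightarrow> E i \<in> events"
    and "\<And>\<omega>. \<omega> \<in> space M \<Longrightarrow> (\<Sum>i\<in>I. indicator (E i) \<omega>) \<le> c"
  shows "(\<Sum>i\<in>I. prob (E i)) \<le> c"
proof -
  have integrable: "integrable M (indicator (E i) :: 'a \<Rightarrow> real)" if "i \<in> I" for i
    using assms(2)[OF that] by (intro integrable_real_indicator) (simp_all add: top.not_eq_extremum[symmetric])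
  have "(\<Sum>i\<in>I. prob (E i)) = (\<Sum>i\<in>I. expectation (indicator (E i)))"
    using assms(2) by (intro sum.cong) auto
  also have "\<dots> = expectation (\<lambda>\<omega>. \<Sum>i\<in>I. indicator (E i) \<omega>)"
    using integrable by (rule Bochner_Integration.integral_sum[symmetric])
  also have "\<dots> \<le> expectation (\<lambda>_. c)"
    using assms(3) integrable by (intro integral_mono Bochner_Integration.integrable_sum) auto
  also have "\<dots> = c"
    by (simp add: prob_space)
  finally show ?thesis .
qed

definition cover_input :: "(nat \<Rightarrow> nat set) \<Rightarrow> nat \<Rightarrow> (nat \<Rightarrow> bool) \<Rightarrow> nat \<Rightarrow> bool" where
  "cover_input pair_of L y i \<longleftrightarrow> pair_of i \<in> cover_edges L y"

lemma cover_input_in_Delta: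
  assumes "bij_betw pair_of {1..2 * L choose 2}
      {{u, v} | u v. u \<in> {1..2 * L} \<and> v \<in> {1..2 * L} \<and> u \<noteq> v}"
    and "3 \<le> L"
  shows "in_Delta (2 * L) pair_of (cover_input pair_of L y)"
    and "one_vs_two_cycle (2 * L) pair_of (cover_input pair_of L y) = of_bool (sheet L y L)"
proof -
  have edges: "edges_of (2 * L) pair_of (cover_input pair_of L y) = cover_edges L y"
    unfolding cover_input_def
    using assms cover_edges_subset_pairs[of L y] by (intro edges_of_indicator) auto
  show "in_Delta (2 * L) pair_of (cover_input pair_of L y)"
    unfolding in_Delta_def edges
    using single_cycle_cover_edges two_cycles_cover_edges assms(2) by blast
  show "one_vs_two_cycle (2 * L) pair_of (cover_input pair_of L y) = of_bool (sheet L y L)"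
    unfolding one_vs_two_cycle_def edges
    using single_cycle_cover_edges not_single_cycle_cover_edges assms(2) by auto
qed

lemma success_count_le_half:
  assumes valid: "valid_ampc (2 * L) S A"
    and bij: "bij_betw pair_of {1..2 * L choose 2}
      {{u, v} | u v. u \<in> {1..2 * L} \<and> v \<in> {1..2 * L} \<and> u \<noteq> v}"
    and "3 \<le> L" and low_degree: "(S * (S + 1)) ^ length A < L"
  shows "(\<Sum>y\<in>cube L. of_bool (ampc_outputs (2 * L) S A (cover_input pair_of L y) (of_bool (sheet L y L))))
    \<le> real (card (cube L)) / 2"
proof -
  define F :: "(nat \<Rightarrow> bool) \<Rightarrow> real"
    where "F y = of_bool (dds_after S (dds0 (2 * L) (cover_input pair_of L y)) A answer_key = {#1#})"
    for y
  have "F \<in> multilinear L ((S * (S + 1)) ^ length A)"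
    using multilinear_dds_after[OF valid, of "cover_input pair_of L" "length A"]
      cover_edges_local[OF \<open>3 \<le> L\<close>]
    unfolding F_def[abs_def] by (simp add: cover_input_def)
  then have correlation: "(\<Sum>y\<in>cube L. parity_char L y * F y) = 0"
    using low_degree by (rule sum_parity_char_multilinear)
  have balanced: "(\<Sum>y\<in>cube L. parity_char L y) = 0"
    using sum_parity_char_multilinear[OF multilinear_const[of 1 L 0]] \<open>3 \<le> L\<close> by simp
  \<comment> \<open>the right-hand side is F y on odd y and 1 - F y on even y\<close>
  have "of_bool (ampc_outputs (2 * L) S A (cover_input pair_of L y) (of_bool (sheet L y L)))
      \<le> 1 / 2 + parity_char L y / 2 - parity_char L y * F y" for y
    by (cases "sheet L y L")
      (auto simp: parity_char_sheet F_def ampc_outputs_def Let_def)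
  then have "(\<Sum>y\<in>cube L. of_bool (ampc_outputs (2 * L) S A (cover_input pair_of L y) (of_bool (sheet L y L))))
      \<le> (\<Sum>y\<in>cube L. 1 / 2 + parity_char L y / 2 - parity_char L y * F y)"
    by (rule sum_mono)
  also have "\<dots> = real (card (cube L)) / 2"
    using correlation balanced by (simp add: sum.distrib sum_subtractf flip: sum_divide_distrib)
  finally show ?thesis .
qed

lemma cover_rounds_lower_bound:
  fixes M :: "alg measure"
  assumes bij: "bij_betw pair_of {1..2 * L choose 2}
      {{u, v} | u v. u \<in> {1..2 * L} \<and> v \<in> {1..2 * L} \<and> u \<noteq> v}"
    and "3 \<le> L" and "1 \<le> S" and "prob_space M"
    and algs: "\<forall>A \<in> space M. valid_ampc (2 * L) S A \<and> length A \<le> R"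
    and success: "\<forall>x. in_Delta (2 * L) pair_of x \<longrightarrow>
           {A \<in> space M. ampc_outputs (2 * L) S A x (one_vs_two_cycle (2 * L) pair_of x)} \<in> sets M
         \<and> measure M {A \<in> space M. ampc_outputs (2 * L) S A x (one_vs_two_cycle (2 * L) pair_of x)}
             \<ge> 1 - 1/6"
  shows "L \<le> (S * (S + 1)) ^ R"
proof (rule ccontr)
  assume "\<not> L \<le> (S * (S + 1)) ^ R"
  interpret prob_space M by fact
  define E where "E y = {A \<in> space M. ampc_outputs (2 * L) S A (cover_input pair_of L y) (of_bool (sheet L y L))}"
    for y
  have E: "E y \<in> events" "prob (E y) \<ge> 5 / 6" for y
    using success cover_input_in_Delta[OF bij \<open>3 \<le> L\<close>, of y] by (auto simp: E_def)
  have "(\<Sum>y\<in>cube L. indicator (E y) A) \<le> real (card (cube L)) / 2" if "A \<in> space M" for A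
  proof -
    have "(S * (S + 1)) ^ length A \<le> (S * (S + 1)) ^ R"
      using algs that \<open>1 \<le> S\<close> by (intro power_increasing) auto
    then have "(S * (S + 1)) ^ length A < L"
      using \<open>\<not> L \<le> (S * (S + 1)) ^ R\<close> by linarith
    then show ?thesis
      using success_count_le_half[OF _ bij \<open>3 \<le> L\<close>] algs that
      by (simp add: E_def indicator_def of_bool_def)
  qed
  then have "(\<Sum>y\<in>cube L. prob (E y)) \<le> real (card (cube L)) / 2"
    using finite_cube E(1) by (intro sum_prob_le) auto
  moreover have "(\<Sum>y\<in>cube L. prob (E y)) \<ge> real (card (cube L)) * (5 / 6)"
    using sum_mono[of "cube L" "\<lambda>_. 5 / 6" "\<lambda>y. prob (E y)"] E(2) by simp
  moreover have "card (cube L) > 0"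
    using finite_cube cube_nonempty by (simp add: card_gt_0_iff)
  ultimately show False by simp
qed

lemma log_bound_of_le_power:
  fixes S n R :: nat
  assumes "2 \<le> S" and "n \<le> 8 * S ^ (6 * R)"
  shows "1/6 * log S n - 1/2 * log S 2 \<le> R"
proof (cases "n = 0")
  case True
  have "log S 0 = 0" by (simp add: log_def)
  moreover have "0 \<le> log S 2" using assms(1) by simp
  ultimately show ?thesis using True by simp
next
  case False
  have "real n \<le> 8 * real S ^ (6 * R)"
    using assms(2) by (metis of_nat_le_iff of_nat_mult of_nat_numeral of_nat_power)
  then have "log S n \<le> log S (8 * S ^ (6 * R))"
    using assms(1) False by simp
  also have "\<dots> = 3 * log S 2 + 6 * R"
    using assms(1) log_nat_power[of 2 S 3] by (simp add: log_mult log_nat_power)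
  finally show ?thesis by simp
qed

theorem theorem5p13:
  fixes n S R :: nat and pair_of :: "nat \<Rightarrow> nat set" and M :: "alg measure"
  assumes "even n" and "S \<ge> 2"
    and "bij_betw pair_of {1..n choose 2}
           {{u, v} | u v. u \<in> {1..n} \<and> v \<in> {1..n} \<and> u \<noteq> v}"
    and "prob_space M"
    and "\<forall>A \<in> space M. valid_ampc n S A \<and> length A \<le> R"
    and "\<forall>x. in_Delta n pair_of x \<longrightarrow>
           {A \<in> space M. ampc_outputs n S A x (one_vs_two_cycle n pair_of x)} \<in> sets M
         \<and> measure M {A \<in> space M. ampc_outputs n S A x (one_vs_two_cycle n pair_of x)}
             \<ge> 1 - 1/6"
  shows "real R \<ge> 1/6 * log (real S) (real n) - 1/2 * log (real S) 2"
proof -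
  have "n \<le> 8 * S ^ (6 * R)"
  proof (cases "n \<le> 8")
    case True
    then show ?thesis using assms(2) one_le_power[of "S" "6 * R"] by linarith
  next
    case False
    define L where "L = n div 2"
    have n: "n = 2 * L" and "3 \<le> L"
      using assms(1) False by (auto simp: L_def)
    have "L \<le> (S * (S + 1)) ^ R"
      using cover_rounds_lower_bound[of pair_of L S M R] assms n \<open>3 \<le> L\<close> by simp
    also have "\<dots> \<le> (S ^ 3) ^ R"
    proof (rule power_mono)
      have "S + 1 \<le> S * S"
        using mult_le_mono1[of 2 S S] assms(2) by linarith
      then show "S * (S + 1) \<le> S ^ 3"
        unfolding power3_eq_cube mult.assoc by (rule mult_le_mono2)
    qed simp
    also have "\<dots> \<le> S ^ (6 * R)"
      using assms(2) by (simp add: power_increasing flip: power_mult)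
    finally show ?thesis using n by simp
  qed
  then show ?thesis
    by (rule log_bound_of_le_power[OF assms(2)])
qed

end
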